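(* Let $n,d,k\in\mathbb{N}$ and let $G\subseteq\mathbb{N}$ be infinite (so $G\approx\omega$). Then there exists $H\subseteq\omega^d\cdot k$ with $H\approx\omega^d\cdot k$ such that every $e\in\binom{H}{n}$ satisfies some coloring rule on $\binom{\omega^d\cdot k}{n}$, and every coefficient of every element of $e$ lies in $G$.
   Context: Ordinals are identified with sets of smaller ordinals; $\approx$ is order-equivalence; $\binom{S}{n}$ is the set of $n$-element subsets. Every $\beta<\omega^d\cdot k$ is uniquely written $\beta=\omega^d b+\omega^{d-1}a_{d-1}+\cdots+\omega a_1+a_0$ with $0\le b<k$, $a_j\in\mathbb{N}$; the numbers $a_0,\dots,a_{d-1}$ are called the coefficients of $\beta$. A coloring rule (CR) on $\binom{\omega^d\cdot k}{n}$ is a pair $(\mathcal{Y},\preceq)$ with $\mathcal{Y}:\{1,\dots,n\}\to\{0,\dots,k-1\}$ and $\preceq$ a total preorder on $I=\{(i,j):1\le i\le n,0\le j<d\}$ (with induced equivalence $\equiv$ and strict part $\prec$) such that: (1) if $d\ge1$, $(i,0)\prec(i',0)$ for $i<i'$; if $d=0$, $\mathcal{Y}(i)<\mathcal{Y}(i')$ for $i<i'$; (2) $(i,j)\equiv(i',j)$ for some $j$ implies $\mathcal{Y}(i)=\mathcal{Y}(i')$; (3) $(i,j)\prec(i,j')$ for $j>j'$; (4) $(i,j)\equiv(i',j')$ implies $j=j'$; (5) for $j>0$, $(i,j)\not\equiv(i',j)$ implies $(i,j-1)\not\equiv(i',j-1)$. An edge $e\in\binom{\omega^d\cdot k}{n}$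 satisfies the CR $(\mathcal{Y},\preceq)$ if its elements can be enumerated as $p_i=\omega^d b_i+\sum_{j<d}\omega^j a_{i,j}$ ($1\le i\le n$) with $b_i=\mathcal{Y}(i)$ for all $i$ and $(i,j)\preceq(i',j')\iff a_{i,j}\le a_{i',j'}$ for all $(i,j),(i',j')\in I$. *)

theory Defs
  imports Main
begin

text \<open>An ordinal beta < omega^d * k is represented by its Cantor normal form data
  (b, a) with b < k and coefficient function a, where a j is the coefficient of
  omega^j (j < d) and a j = 0 for j >= d.\<close>

type_synonym ordrep = "nat \<times> (nat \<Rightarrow> nat)"

definition OrdSet :: "nat \<Rightarrow> nat \<Rightarrow> ordrep set" where
  "OrdSet d k = {(b, a). b < k \<and> (\<forall>j\<ge>d. a j = 0)}"

definition ord_less :: "nat \<Rightarrow> ordrep \<Rightarrow> ordrep \<Rightarrow> bool" where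
  "ord_less d x y \<longleftrightarrow>
     fst x < fst y \<or>
     (fst x = fst y \<and> (\<exists>j<d. snd x j < snd y j \<and> (\<forall>i. j < i \<and> i < d \<longrightarrow> snd x i = snd y i)))"

definition order_equiv_full :: "nat \<Rightarrow> nat \<Rightarrow> ordrep set \<Rightarrow> bool" where
  "order_equiv_full d k H \<longleftrightarrow>
     (\<exists>f. bij_betw f (OrdSet d k) H \<and>
          (\<forall>x\<in>OrdSet d k. \<forall>y\<in>OrdSet d k. ord_less d x y \<longrightarrow> ord_less d (f x) (f y)))"

definition IndexSet :: "nat \<Rightarrow> nat \<Rightarrow> (nat \<times> nat) set" where
  "IndexSet n d = {1..n} \<times> {0..<d}"

definition is_CR :: "nat \<Rightarrow> nat \<Rightarrow> nat \<Rightarrow> (nat \<Rightarrow> nat) \<Rightarrow> ((nat \<times> nat) \<times> (nat \<times> nat)) set \<Rightarrow> bool" where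
  "is_CR n d k Y R \<longleftrightarrow>
    (let I = IndexSet n d;
         le = (\<lambda>p q. (p, q) \<in> R);
         eqv = (\<lambda>p q. le p q \<and> le q p);
         lt = (\<lambda>p q. le p q \<and> \<not> le q p)
     in
      (\<forall>i\<in>{1..n}. Y i < k) \<and>
      R \<subseteq> I \<times> I \<and> refl_on I R \<and> trans R \<and> total_on I R \<and>
      (d \<ge> 1 \<longrightarrow> (\<forall>i\<in>{1..n}. \<forall>i'\<in>{1..n}. i < i' \<longrightarrow> lt (i, 0) (i', 0))) \<and>
      (d = 0 \<longrightarrow> (\<forall>i\<in>{1..n}. \<forall>i'\<in>{1..n}. i < i' \<longrightarrow> Y i < Y i')) \<and>
      (\<forall>i\<in>{1..n}. \<forall>i'\<in>{1..n}. \<forall>j<d. eqv (i, j) (i', j) \<longrightarrow> Y i = Y i') \<and>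
      (\<forall>i\<in>{1..n}. \<forall>j<d. \<forall>j'<d. j > j' \<longrightarrow> lt (i, j) (i, j')) \<and>
      (\<forall>p\<in>I. \<forall>q\<in>I. eqv p q \<longrightarrow> snd p = snd q) \<and>
      (\<forall>i\<in>{1..n}. \<forall>i'\<in>{1..n}. \<forall>j<d. j > 0 \<longrightarrow>
          \<not> eqv (i, j) (i', j) \<longrightarrow> \<not> eqv (i, j - 1) (i', j - 1)))"

definition satisfies_CR :: "nat \<Rightarrow> nat \<Rightarrow> ordrep set \<Rightarrow> (nat \<Rightarrow> nat) \<Rightarrow> ((nat \<times> nat) \<times> (nat \<times> nat)) set \<Rightarrow> bool" where
  "satisfies_CR n d e Y R \<longleftrightarrow>
    (\<exists>p :: nat \<Rightarrow> ordrep. e = p ` {1..n} \<and>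
       (\<forall>i\<in>{1..n}. fst (p i) = Y i) \<and>
       (\<forall>x\<in>IndexSet n d. \<forall>y\<in>IndexSet n d.
          ((x, y) \<in> R \<longleftrightarrow> snd (p (fst x)) (snd x) \<le> snd (p (fst y)) (snd y))))"

end

(* H is the image of an order embedding of omega^d * k into itself.  Let t_j(x) be an
   injective code of the tail (b, a_(d-1), ..., a_j) of x that is increasing in a_j and
   strictly larger than t_(j+1)(x).  The embedding keeps b and replaces a_j by the
   (d t_j(x) + j)-th element of G.  Then new coefficients at different positions never
   coincide, coefficients at the same position j coincide exactly when the tails from j
   upwards coincide, and within one element they decrease as j grows: these are exactly
   conditions (2)-(5) for the preorder induced by the coefficients of an edge.  Moreover the
   coefficient at position 0 (b if d = 0) determines the element, so enumerating an edge
   along it gives condition (1). *)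

theory Submission
  imports Defs "HOL-Library.Nat_Bijection" "HOL-Library.Infinite_Set"
begin

lemma strict_mono_triangle: "strict_mono triangle"
  by (simp add: strict_mono_Suc_iff)

lemma prod_encode_strict_mono_snd: "a < a' \<Longrightarrow> prod_encode (m, a) < prod_encode (m, a')"
  using strict_mono_triangle by (simp add: prod_encode_def strict_mono_less)

function tail_code :: "nat \<Rightarrow> ordrep \<Rightarrow> nat \<Rightarrow> nat" where
  "tail_code d x j =
     (if d \<le> j then fst x else Suc (prod_encode (tail_code d x (Suc j), snd x j)))"
  by auto
termination by (relation "measure (\<lambda>(d, x, j). d - j)") auto

declare tail_code.simps [simp del]

lemma tail_code_eq_iff:
  "tail_code d x j = tail_code d y j \<longleftrightarrow>
     fst x = fst y \<and> (\<forall>i. j \<le> i \<and> i < d \<longrightarrow> snd x i = snd y i)"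
proof (induction "d - j" arbitrary: j)
  case 0
  then show ?case by (simp add: tail_code.simps[of d _ j])
next
  case (Suc t)
  then have IH: "tail_code d x (Suc j) = tail_code d y (Suc j) \<longleftrightarrow>
      fst x = fst y \<and> (\<forall>i. Suc j \<le> i \<and> i < d \<longrightarrow> snd x i = snd y i)"
    by simp
  have "(\<forall>i. j \<le> i \<and> i < d \<longrightarrow> snd x i = snd y i) \<longleftrightarrow>
      snd x j = snd y j \<and> (\<forall>i. Suc j \<le> i \<and> i < d \<longrightarrow> snd x i = snd y i)"
    using Suc.hyps(2) by (auto simp: Suc_le_eq) (metis le_neq_implies_less)
  with IH Suc.hyps(2) show ?case by (auto simp: tail_code.simps[of d _ j])
qed

lemma tail_code_strict_antimono:
  assumes "j < i" "i \<le> d"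
  shows "tail_code d x i < tail_code d x j"
proof -
  have one_step: "tail_code d x (Suc j) < tail_code d x j" if "j < d" for j
    using that le_prod_encode_1[of "tail_code d x (Suc j)" "snd x j"]
    by (simp add: tail_code.simps[of d x j])
  from assms have "Suc j \<le> i" by simp
  then show ?thesis
    using assms(2)
  proof (induction i rule: dec_induct)
    case (step i)
    then show ?case
      using less_trans[OF one_step[of i]] by simp
  qed (simp add: one_step)
qed

lemma tail_code_less:
  assumes "j < d" "fst x = fst y" "\<forall>i. j < i \<and> i < d \<longrightarrow> snd x i = snd y i"
    and "snd x j < snd y j"
  shows "tail_code d x j < tail_code d y j"
proof -
  have "tail_code d x (Suc j) = tail_code d y (Suc j)"
    using assms(2,3) by (simp add: tail_code_eq_iff Suc_le_eq)
  then show ?thesis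
    using assms(1,4) by (simp add: tail_code.simps[of d _ j] prod_encode_strict_mono_snd)
qed

definition embed_coeff :: "nat \<Rightarrow> nat set \<Rightarrow> ordrep \<Rightarrow> nat \<Rightarrow> nat" where
  "embed_coeff d G x j = enumerate G (d * tail_code d x j + j)"

definition embed :: "nat \<Rightarrow> nat set \<Rightarrow> ordrep \<Rightarrow> ordrep" where
  "embed d G x = (fst x, \<lambda>j. if j < d then embed_coeff d G x j else 0)"

lemma embed_coeff_in: "infinite G \<Longrightarrow> embed_coeff d G x j \<in> G"
  by (simp add: embed_coeff_def enumerate_in_set)

lemma embed_coeff_eq_iff:
  assumes "infinite G" "j < d" "j' < d"
  shows "embed_coeff d G x j = embed_coeff d G y j' \<longleftrightarrow>
           j = j' \<and> tail_code d x j = tail_code d y j"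
proof -
  have "embed_coeff d G x j = embed_coeff d G y j' \<longleftrightarrow>
        d * tail_code d x j + j = d * tail_code d y j' + j'"
    using inj_enumerate[OF assms(1)] by (simp add: embed_coeff_def inj_eq)
  also have "\<dots> \<longleftrightarrow> j = j' \<and> tail_code d x j = tail_code d y j"
  proof
    assume eq: "d * tail_code d x j + j = d * tail_code d y j' + j'"
    have "j = (d * tail_code d x j + j) mod d" "j' = (d * tail_code d y j' + j') mod d"
      using assms(2,3) by simp_all
    with eq have "j = j'" by simp
    with eq assms(2) show "j = j' \<and> tail_code d x j = tail_code d y j" by simp
  qed auto
  finally show ?thesis .
qed

lemma embed_coeff_less_iff:
  assumes "infinite G" "j < d"
  shows "embed_coeff d G x j < embed_coeff d G y j \<longleftrightarrow> tail_code d x j < tail_code d y j"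
  using assms by (simp add: embed_coeff_def)

lemma embed_coeff_strict_antimono:
  assumes "infinite G" "j' < j" "j < d"
  shows "embed_coeff d G x j < embed_coeff d G x j'"
proof -
  have "tail_code d x j < tail_code d x j'"
    using assms by (simp add: tail_code_strict_antimono)
  then have "d * tail_code d x j + d \<le> d * tail_code d x j'"
    by (metis Suc_leI mult_Suc_right mult_le_mono2 add.commute)
  then show ?thesis
    using assms by (simp add: embed_coeff_def)
qed

lemma fst_embed [simp]: "fst (embed d G x) = fst x"
  by (simp add: embed_def)

lemma snd_embed [simp]: "j < d \<Longrightarrow> snd (embed d G x) j = embed_coeff d G x j"
  by (simp add: embed_def)

lemma embed_in_OrdSet: "x \<in> OrdSet d k \<Longrightarrow> embed d G x \<in> OrdSet d k"
  by (auto simp: OrdSet_def embed_def)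

lemma ord_less_embed:
  assumes "infinite G" "ord_less d x y"
  shows "ord_less d (embed d G x) (embed d G y)"
proof (cases "fst x < fst y")
  case True
  then show ?thesis by (simp add: ord_less_def embed_def)
next
  case False
  then obtain j where j: "fst x = fst y" "j < d" "snd x j < snd y j"
    "\<forall>i. j < i \<and> i < d \<longrightarrow> snd x i = snd y i"
    using assms(2) by (auto simp: ord_less_def)
  then have "embed_coeff d G x j < embed_coeff d G y j"
    using assms(1) by (simp add: embed_coeff_less_iff tail_code_less)
  moreover have "embed_coeff d G x i = embed_coeff d G y i" if "j < i" for i
  proof -
    have "tail_code d x i = tail_code d y i"
      using j that by (simp add: tail_code_eq_iff)
    then show ?thesis by (simp add: embed_coeff_def)
  qed
  ultimately show ?thesis
    using j by (auto simp: ord_less_def embed_def)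
qed

text \<open>The coordinate along which condition (1) of a coloring rule orders an edge.\<close>
definition key :: "nat \<Rightarrow> ordrep \<Rightarrow> nat" where
  "key d z = (if d = 0 then fst z else snd z 0)"

lemma inj_on_key_embed:
  assumes "infinite G"
  shows "inj_on (key d \<circ> embed d G) (OrdSet d k)"
proof (rule inj_onI)
  fix x y assume x: "x \<in> OrdSet d k" and y: "y \<in> OrdSet d k"
    and eq: "(key d \<circ> embed d G) x = (key d \<circ> embed d G) y"
  show "x = y"
  proof (cases "d = 0")
    case True
    then show ?thesis
      using x y eq by (auto simp: OrdSet_def key_def embed_def prod_eq_iff)
  next
    case False
    then have tails: "tail_code d x 0 = tail_code d y 0"
      using eq assms by (simp add: key_def embed_def embed_coeff_eq_iff)
    have "snd x i = snd y i" for i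
    proof (cases "i < d")
      case True
      with tails show ?thesis by (simp add: tail_code_eq_iff)
    next
      case False
      with x y show ?thesis by (auto simp: OrdSet_def)
    qed
    with tails show ?thesis
      by (simp add: tail_code_eq_iff prod_eq_iff fun_eq_iff)
  qed
qed

lemma order_equiv_full_embed:
  assumes "infinite G"
  shows "order_equiv_full d k (embed d G ` OrdSet d k)"
  unfolding order_equiv_full_def
proof (intro exI conjI ballI impI)
  show "bij_betw (embed d G) (OrdSet d k) (embed d G ` OrdSet d k)"
    using inj_on_imageI2[OF inj_on_key_embed[OF assms]] by (simp add: bij_betw_def)
qed (rule ord_less_embed[OF assms])

lemma finite_set_enumeration_by_key:
  fixes f :: "'a \<Rightarrow> 'b::linorder"
  assumes "finite A" "card A = n" "inj_on f A"
  obtains p where "A = p ` {1..n}"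
    and "\<And>i i'. i \<in> {1..n} \<Longrightarrow> i' \<in> {1..n} \<Longrightarrow> i < i' \<Longrightarrow> f (p i) < f (p i')"
proof -
  interpret folding_insort_key "(\<le>)" "(<)" A f
    using assms(3) by unfold_locales
  obtain l where sorted: "sorted_wrt (<) (map f l)" and l: "set l = A" "length l = n"
    using finite_set_strict_sorted[of A] assms(1,2) by blast
  define p where "p i = l ! (i - 1)" for i
  have "A = p ` {1..n}"
  proof -
    have "{..<n} = (\<lambda>i. i - 1) ` {1..n}"
      by (auto simp: image_iff intro!: bexI[of _ "Suc _"])
    then show ?thesis
      using l by (simp add: p_def set_conv_nth image_image lessThan_def image_Collect[symmetric])
  qed
  moreover have "f (p i) < f (p i')" if "i \<in> {1..n}" "i' \<in> {1..n}" "i < i'" for i i'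
    using sorted that l(2) by (auto simp: p_def sorted_wrt_iff_nth_less)
  ultimately show ?thesis by (rule that)
qed

definition induced_rule :: "nat \<Rightarrow> nat \<Rightarrow> (nat \<Rightarrow> ordrep) \<Rightarrow> ((nat \<times> nat) \<times> (nat \<times> nat)) set" where
  "induced_rule n d p =
     {(u, w). u \<in> IndexSet n d \<and> w \<in> IndexSet n d \<and>
              snd (p (fst u)) (snd u) \<le> snd (p (fst w)) (snd w)}"

lemma mem_induced_rule:
  "(u, w) \<in> induced_rule n d p \<longleftrightarrow>
     u \<in> IndexSet n d \<and> w \<in> IndexSet n d \<and> snd (p (fst u)) (snd u) \<le> snd (p (fst w)) (snd w)"
  by (simp add: induced_rule_def)

lemma satisfies_induced_rule:
  "satisfies_CR n d (p ` {1..n}) (\<lambda>i. fst (p i)) (induced_rule n d p)"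
  unfolding satisfies_CR_def mem_induced_rule by auto

lemma is_CR_induced_rule:
  assumes "\<And>i. i \<in> {1..n} \<Longrightarrow> fst (p i) < k"
    and "\<And>i i'. i \<in> {1..n} \<Longrightarrow> i' \<in> {1..n} \<Longrightarrow> i < i' \<Longrightarrow> key d (p i) < key d (p i')"
    and "\<And>i i' j. i \<in> {1..n} \<Longrightarrow> i' \<in> {1..n} \<Longrightarrow> j < d \<Longrightarrow>
           snd (p i) j = snd (p i') j \<Longrightarrow> fst (p i) = fst (p i')"
    and "\<And>i j j'. i \<in> {1..n} \<Longrightarrow> j' < j \<Longrightarrow> j < d \<Longrightarrow> snd (p i) j < snd (p i) j'"
    and "\<And>i i' j j'. i \<in> {1..n} \<Longrightarrow> i' \<in> {1..n} \<Longrightarrow> j < d \<Longrightarrow> j' < d \<Longrightarrow>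
           snd (p i) j = snd (p i') j' \<Longrightarrow> j = j'"
    and "\<And>i i' j. i \<in> {1..n} \<Longrightarrow> i' \<in> {1..n} \<Longrightarrow> Suc j < d \<Longrightarrow>
           snd (p i) j = snd (p i') j \<Longrightarrow> snd (p i) (Suc j) = snd (p i') (Suc j)"
  shows "is_CR n d k (\<lambda>i. fst (p i)) (induced_rule n d p)"
  unfolding is_CR_def Let_def
  apply (intro conjI)
  subgoal using assms(1) by blast
  subgoal by (auto simp: induced_rule_def)
  subgoal by (auto simp: induced_rule_def refl_on_def)
  subgoal by (auto simp: induced_rule_def trans_def)
  subgoal by (auto simp: induced_rule_def total_on_def)
  subgoal
  proof (intro impI ballI)
    fix i i' assume "1 \<le> d" "i \<in> {1..n}" "i' \<in> {1..n}" "i < i'"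
    then show "((i, 0), i', 0) \<in> induced_rule n d p \<and> ((i', 0), i, 0) \<notin> induced_rule n d p"
      using assms(2)[of i i'] by (auto simp: mem_induced_rule IndexSet_def key_def)
  qed
  subgoal using assms(2) by (auto simp: key_def)
  subgoal
  proof (intro ballI allI impI)
    fix i i' j assume "i \<in> {1..n}" "i' \<in> {1..n}" "j < d"
      and "((i, j), i', j) \<in> induced_rule n d p \<and> ((i', j), i, j) \<in> induced_rule n d p"
    then show "fst (p i) = fst (p i')"
      using assms(3)[of i i' j] by (simp add: mem_induced_rule)
  qed
  subgoal
  proof (intro ballI allI impI)
    fix i j j' assume "i \<in> {1..n}" "j < d" "j' < d" "j' < j"
    then show "((i, j), i, j') \<in> induced_rule n d p \<and> ((i, j'), i, j) \<notin> induced_rule n d p"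
      using assms(4)[of i j' j] by (auto simp: mem_induced_rule IndexSet_def)
  qed
  subgoal using assms(5) by (auto simp: mem_induced_rule IndexSet_def)
  subgoal
  proof (intro ballI allI impI)
    fix i i' j assume i: "i \<in> {1..n}" "i' \<in> {1..n}" and j: "j < d" "0 < j"
      and "\<not> (((i, j), i', j) \<in> induced_rule n d p \<and> ((i', j), i, j) \<in> induced_rule n d p)"
    moreover obtain j0 where "j = Suc j0"
      using j by (cases j) auto
    ultimately show
      "\<not> (((i, j - 1), i', j - 1) \<in> induced_rule n d p \<and> ((i', j - 1), i, j - 1) \<in> induced_rule n d p)"
      using assms(6)[of i i' j0] by (auto simp: mem_induced_rule IndexSet_def)
  qed
  done

lemma is_CR_embed:
  assumes G: "infinite G" and q: "q ` {1..n} \<subseteq> OrdSet d k"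
    and sorted: "\<And>i i'. i \<in> {1..n} \<Longrightarrow> i' \<in> {1..n} \<Longrightarrow> i < i' \<Longrightarrow>
                   key d (embed d G (q i)) < key d (embed d G (q i'))"
  shows "is_CR n d k (\<lambda>i. fst (embed d G (q i))) (induced_rule n d (\<lambda>i. embed d G (q i)))"
proof (rule is_CR_induced_rule)
  show "fst (embed d G (q i)) < k" if "i \<in> {1..n}" for i
  proof -
    have "q i \<in> OrdSet d k"
      using q that by blast
    then show ?thesis by (auto simp: OrdSet_def)
  qed
  show "key d (embed d G (q i)) < key d (embed d G (q i'))"
    if "i \<in> {1..n}" "i' \<in> {1..n}" "i < i'" for i i'
    using sorted that .
  show "fst (embed d G (q i)) = fst (embed d G (q i'))"
    if "j < d" "snd (embed d G (q i)) j = snd (embed d G (q i')) j" for i i' j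
    using G that by (simp add: embed_coeff_eq_iff tail_code_eq_iff)
  show "snd (embed d G (q i)) j < snd (embed d G (q i)) j'" if "j' < j" "j < d" for i j j'
    using G that by (simp add: embed_coeff_strict_antimono)
  show "j = j'"
    if "j < d" "j' < d" "snd (embed d G (q i)) j = snd (embed d G (q i')) j'" for i i' j j'
    using G that by (simp add: embed_coeff_eq_iff)
  show "snd (embed d G (q i)) (Suc j) = snd (embed d G (q i')) (Suc j)"
    if "Suc j < d" "snd (embed d G (q i)) j = snd (embed d G (q i')) j" for i i' j
    using G that by (simp add: embed_coeff_eq_iff tail_code_eq_iff)
qed

lemma embed_edge_satisfies_CR:
  assumes G: "infinite G" and e: "e \<subseteq> embed d G ` OrdSet d k" "finite e" "card e = n"
  shows "\<exists>Y R. is_CR n d k Y R \<and> satisfies_CR n d e Y R"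
proof -
  obtain A where A: "A \<subseteq> OrdSet d k" "e = embed d G ` A"
    using e(1) by (auto simp: subset_image_iff)
  have inj: "inj_on (key d \<circ> embed d G) A"
    using inj_on_key_embed[OF G] A(1) by (rule inj_on_subset)
  have "finite A" "card A = n"
    using e(2,3) A(2) inj_on_imageI2[OF inj] by (simp_all add: finite_image_iff card_image)
  then obtain q where q: "A = q ` {1..n}"
    and sorted: "\<And>i i'. i \<in> {1..n} \<Longrightarrow> i' \<in> {1..n} \<Longrightarrow> i < i' \<Longrightarrow>
                   key d (embed d G (q i)) < key d (embed d G (q i'))"
    using finite_set_enumeration_by_key[OF _ _ inj, unfolded comp_apply] by blast
  have "e = (\<lambda>i. embed d G (q i)) ` {1..n}"
    using A(2) q by (simp add: image_image)
  moreover have "is_CR n d k (\<lambda>i. fst (embed d G (q i))) (induced_rule n d (\<lambda>i. embed d G (q i)))"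
    using A(1) q by (intro is_CR_embed[OF G _ sorted]) simp
  ultimately show ?thesis
    using satisfies_induced_rule[of n d "\<lambda>i. embed d G (q i)"] by auto
qed

theorem lemma9p2:
  fixes n d k :: nat and G :: "nat set"
  assumes "infinite G"
  shows "\<exists>H \<subseteq> OrdSet d k. order_equiv_full d k H \<and>
           (\<forall>e. e \<subseteq> H \<and> finite e \<and> card e = n \<longrightarrow>
              (\<exists>Y R. is_CR n d k Y R \<and> satisfies_CR n d e Y R) \<and>
              (\<forall>x\<in>e. \<forall>j<d. snd x j \<in> G))"
proof (intro exI[of _ "embed d G ` OrdSet d k"] conjI allI impI)
  show "embed d G ` OrdSet d k \<subseteq> OrdSet d k"
    using embed_in_OrdSet by blast
  show "order_equiv_full d k (embed d G ` OrdSet d k)"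
    using assms by (rule order_equiv_full_embed)
  fix e assume e: "e \<subseteq> embed d G ` OrdSet d k \<and> finite e \<and> card e = n"
  then show "\<exists>Y R. is_CR n d k Y R \<and> satisfies_CR n d e Y R"
    using embed_edge_satisfies_CR[OF assms] by blast
  show "\<forall>x\<in>e. \<forall>j<d. snd x j \<in> G"
    using e embed_coeff_in[OF assms] by auto
qed

end
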